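(* Let $\Gamma$ be a simple, undirected, connected graph of order $p$ that contains a cycle, and let $g(\Gamma)$ be its girth. Then $$\gamma_{[3R]}(\Gamma)\le 3p+2-\frac{5g(\Gamma)}{3}.$$
   Context: The girth of a graph is the minimum length of a cycle in it. For a graph $\Gamma=(V,E)$ and $h:V\to\{0,1,2,3,4\}$, let $AN(v)=\{w\in N(v):h(w)\ge 1\}$, $AN[v]=AN(v)\cup\{v\}$ and $h(S)=\sum_{u\in S}h(u)$. $h$ is a triple Roman dominating function (3RDF) if every $v$ with $h(v)<3$ satisfies $h(AN[v])\ge|AN(v)|+3$. The triple Roman domination number $\gamma_{[3R]}(\Gamma)$ is the minimum weight $h(V)$ of a 3RDF of $\Gamma$. *)

theory Defs
  imports Complex_Main
begin

definition simple_graph :: "'a set \<Rightarrow> ('a \<Rightarrow> 'a \<Rightarrow> bool) \<Rightarrow> bool" where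
  "simple_graph V E \<longleftrightarrow> finite V \<and> (\<forall>u v. E u v \<longrightarrow> u \<in> V \<and> v \<in> V)
      \<and> (\<forall>u v. E u v \<longrightarrow> E v u) \<and> (\<forall>v. \<not> E v v)"

definition connected_graph :: "'a set \<Rightarrow> ('a \<Rightarrow> 'a \<Rightarrow> bool) \<Rightarrow> bool" where
  "connected_graph V E \<longleftrightarrow> V \<noteq> {} \<and> (\<forall>u\<in>V. \<forall>v\<in>V. E\<^sup>*\<^sup>* u v)"

definition nbhd :: "('a \<Rightarrow> 'a \<Rightarrow> bool) \<Rightarrow> 'a set \<Rightarrow> 'a \<Rightarrow> 'a set" where
  "nbhd E V v = {w \<in> V. E v w}"

definition is_cycle :: "'a set \<Rightarrow> ('a \<Rightarrow> 'a \<Rightarrow> bool) \<Rightarrow> 'a list \<Rightarrow> bool" where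
  "is_cycle V E c \<longleftrightarrow> length c \<ge> 3 \<and> distinct c \<and> set c \<subseteq> V
      \<and> (\<forall>i < length c - 1. E (c ! i) (c ! (i + 1)))
      \<and> E (last c) (hd c)"

definition has_cycle :: "'a set \<Rightarrow> ('a \<Rightarrow> 'a \<Rightarrow> bool) \<Rightarrow> bool" where
  "has_cycle V E \<longleftrightarrow> (\<exists>c. is_cycle V E c)"

definition girth :: "'a set \<Rightarrow> ('a \<Rightarrow> 'a \<Rightarrow> bool) \<Rightarrow> nat" where
  "girth V E = (LEAST k. \<exists>c. is_cycle V E c \<and> length c = k)"

definition active_nbhd :: "'a set \<Rightarrow> ('a \<Rightarrow> 'a \<Rightarrow> bool) \<Rightarrow> ('a \<Rightarrow> nat) \<Rightarrow> 'a \<Rightarrow> 'a set" where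
  "active_nbhd V E h v = {w \<in> nbhd E V v. h w \<ge> 1}"

definition is_3RDF :: "'a set \<Rightarrow> ('a \<Rightarrow> 'a \<Rightarrow> bool) \<Rightarrow> ('a \<Rightarrow> nat) \<Rightarrow> bool" where
  "is_3RDF V E h \<longleftrightarrow> (\<forall>v\<in>V. h v \<le> 4) \<and> (\<forall>v. v \<notin> V \<longrightarrow> h v = 0)
     \<and> (\<forall>v\<in>V. h v < 3 \<longrightarrow>
          sum h (insert v (active_nbhd V E h v)) \<ge> card (active_nbhd V E h v) + 3)"

definition triple_roman_domination_number :: "'a set \<Rightarrow> ('a \<Rightarrow> 'a \<Rightarrow> bool) \<Rightarrow> nat" where
  "triple_roman_domination_number V E = (LEAST w. \<exists>h. is_3RDF V E h \<and> sum h V = w)"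

end

theory Submission
  imports Defs
begin

text \<open>Label a shortest cycle v_0, ..., v_{g-1} by repeating the block 0, 4, 0 and ending with 3
  if g = 1 (mod 3) or with 2, 2 if g = 2 (mod 3); all other vertices get 3. Every vertex labelled
  below 3 has a neighbour v_{i-1} or v_{i+1} on the path v_0 ... v_{g-1} whose label brings the
  pair to at least 4, and this alone makes the labelling a triple Roman dominating function.
  Its weight is at most 3 (p - g) + (4 g + 6) / 3 = 3 p + 2 - 5 g / 3.\<close>

definition path_labelling :: "nat \<Rightarrow> nat \<Rightarrow> nat" where
  "path_labelling g i =
     (if i < 3 * (g div 3) then (if i mod 3 = 1 then 4 else 0)
      else if g mod 3 = 1 then 3 else 2)"

lemma path_labelling_le_4: "path_labelling g i \<le> 4"
  by (simp add: path_labelling_def)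

lemma path_labelling_3q_plus:
  assumes "r < 3"
  shows "path_labelling (3 * q + r) k =
    (if k < 3 * q then (if k mod 3 = 1 then 4 else 0) else if r = 1 then 3 else 2)"
  using assms by (simp add: path_labelling_def)

lemma path_labelling_partner:
  assumes "i < g" and "path_labelling g i < 3"
  obtains j where "j = i + 1 \<and> j < g \<or> j + 1 = i"
    and "1 \<le> path_labelling g j" and "4 \<le> path_labelling g i + path_labelling g j"
proof -
  obtain q r where g: "g = 3 * q + r" and "r < 3"
    using div_mod_decomp[of g 3] by (metis mod_less_divisor zero_less_numeral mult.commute)
  note lab = path_labelling_3q_plus[OF \<open>r < 3\<close>, of q, folded g]
  show ?thesis
  proof (cases "i < 3 * q")
    case True
    with assms(2) have "i mod 3 \<noteq> 1" by (auto simp: lab)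
    with True have lab_i: "path_labelling g i = 0" by (simp add: lab)
    from \<open>i mod 3 \<noteq> 1\<close> consider "i mod 3 = 0" | "i mod 3 = 2" by linarith
    then show ?thesis
    proof cases
      case 1
      with True have "i + 1 < 3 * q" and "(i + 1) mod 3 = 1" by presburger+
      then have "path_labelling g (i + 1) = 4" by (simp add: lab)
      moreover have "i + 1 < g" using \<open>i + 1 < 3 * q\<close> g by linarith
      ultimately show ?thesis using lab_i by (intro that[of "i + 1"]) simp_all
    next
      case 2
      then have "i = 3 * (i div 3) + 2" by (metis mod_mult_div_eq add.commute)
      then have "i - 1 = 3 * (i div 3) + 1" by linarith
      with True have "i - 1 < 3 * q" and "(i - 1) mod 3 = 1" and "i - 1 + 1 = i" by simp_all
      then have "path_labelling g (i - 1) = 4" by (simp add: lab)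
      then show ?thesis using lab_i \<open>i - 1 + 1 = i\<close> by (intro that[of "i - 1"]) simp_all
    qed
  next
    case False
    have "r \<noteq> 0" using False assms(1) g by linarith
    moreover have "r \<noteq> 1" using False assms(2) by (auto simp: lab)
    ultimately have "r = 2" using \<open>r < 3\<close> by linarith
    with False have lab_tail: "path_labelling g k = 2" if "3 * q \<le> k" for k
      using that by (simp add: lab)
    from False assms(1) g \<open>r = 2\<close> consider "i = 3 * q" "i + 1 < g" | "i = 3 * q + 1" by linarith
    then show ?thesis
    proof cases
      case 1
      then show ?thesis using lab_tail by (intro that[of "i + 1"]) simp_all
    next
      case 2
      then show ?thesis using lab_tail by (intro that[of "i - 1"]) simp_all
    qed
  qed
qed

lemma sum_block_pattern: "(\<Sum>i<3 * q. if i mod 3 = 1 then 4 else 0 :: nat) = 4 * q"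
proof (induction q)
  case 0
  then show ?case by simp
next
  case (Suc q)
  have "{..<3 * Suc q} = {..<3 * q} \<union> {3 * q, 3 * q + 1, 3 * q + 2}" by auto
  moreover have "(3 * q) mod 3 = 0" "(3 * q + 1) mod 3 = 1" "(3 * q + 2) mod 3 = 2" by presburger+
  ultimately show ?case using Suc by simp
qed

lemma sum_path_labelling: "3 * (\<Sum>i<g. path_labelling g i) \<le> 4 * g + 6"
proof -
  obtain q r where g: "g = 3 * q + r" and "r < 3"
    using div_mod_decomp[of g 3] by (metis mod_less_divisor zero_less_numeral mult.commute)
  note lab = path_labelling_3q_plus[OF \<open>r < 3\<close>, of q, folded g]
  have "3 * q \<le> g" using g by simp
  have "(\<Sum>i<g. path_labelling g i)
      = (\<Sum>i<3 * q. path_labelling g i) + (\<Sum>i\<in>{3 * q..<g}. path_labelling g i)"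
    using sum.atLeastLessThan_concat[of 0 "3 * q" g "path_labelling g"] \<open>3 * q \<le> g\<close> by (simp add: atLeast0LessThan)
  also have "(\<Sum>i<3 * q. path_labelling g i) = 4 * q"
    by (subst sum_block_pattern[symmetric], rule sum.cong) (simp_all add: lab)
  also have "(\<Sum>i\<in>{3 * q..<g}. path_labelling g i) = (\<Sum>i\<in>{3 * q..<g}. if r = 1 then 3 else 2)"
    by (rule sum.cong) (simp_all add: lab)
  also have "\<dots> = r * (if r = 1 then 3 else 2)"
    using g by simp
  finally have "(\<Sum>i<g. path_labelling g i) = 4 * q + r * (if r = 1 then 3 else 2)" .
  moreover have "r = 0 \<or> r = 1 \<or> r = 2" using \<open>r < 3\<close> by linarith
  ultimately show ?thesis using g by auto
qed

lemma is_3RDF_if_partner: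
  assumes "finite V" and "\<And>v. \<not> E v v"
    and "\<And>v. v \<in> V \<Longrightarrow> h v \<le> 4" and "\<And>v. v \<notin> V \<Longrightarrow> h v = 0"
    and partner: "\<And>v. v \<in> V \<Longrightarrow> h v < 3 \<Longrightarrow> \<exists>w\<in>V. E v w \<and> 1 \<le> h w \<and> 4 \<le> h v + h w"
  shows "is_3RDF V E h"
  unfolding is_3RDF_def
proof (intro conjI ballI allI impI)
  fix v assume "v \<in> V" and "h v < 3"
  then obtain w where "w \<in> V" "E v w" "1 \<le> h w" "4 \<le> h v + h w" using partner by blast
  define A where "A = active_nbhd V E h v"
  have "finite A" using \<open>finite V\<close> by (simp add: A_def active_nbhd_def nbhd_def)
  have "w \<in> A" and "v \<notin> A"
    using \<open>w \<in> V\<close> \<open>E v w\<close> \<open>1 \<le> h w\<close> assms(2) by (auto simp: A_def active_nbhd_def nbhd_def)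
  have "card (A - {w}) \<le> sum h (A - {w})"
    using sum_mono[of "A - {w}" "\<lambda>_. 1" h] by (auto simp: A_def active_nbhd_def)
  moreover have "card A = card (A - {w}) + 1"
    using card.remove[OF \<open>finite A\<close> \<open>w \<in> A\<close>] by simp
  moreover have "sum h (insert v A) = h v + h w + sum h (A - {w})"
    using \<open>finite A\<close> \<open>w \<in> A\<close> \<open>v \<notin> A\<close> by (simp add: sum.remove)
  ultimately show "card (active_nbhd V E h v) + 3 \<le> sum h (insert v (active_nbhd V E h v))"
    using \<open>4 \<le> h v + h w\<close> by (simp add: A_def)
qed (use assms in auto)

lemma triple_roman_domination_number_le:
  assumes "is_3RDF V E h"
  shows "triple_roman_domination_number V E \<le> sum h V"
  unfolding triple_roman_domination_number_def by (rule Least_le) (use assms in blast)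

lemma girth_cycle:
  assumes "has_cycle V E"
  obtains c where "is_cycle V E c" and "length c = girth V E"
proof -
  have "\<exists>c. is_cycle V E c \<and> length c = girth V E"
    unfolding girth_def by (rule LeastI_ex) (use assms in \<open>auto simp: has_cycle_def\<close>)
  then show ?thesis using that by blast
qed

definition cycle_labelling :: "'a set \<Rightarrow> 'a list \<Rightarrow> 'a \<Rightarrow> nat" where
  "cycle_labelling V c x =
     (if x \<in> set c then path_labelling (length c) (THE i. i < length c \<and> c ! i = x)
      else if x \<in> V then 3 else 0)"

lemma cycle_labelling_nth:
  assumes "distinct c" and "i < length c"
  shows "cycle_labelling V c (c ! i) = path_labelling (length c) i"
proof -
  have "(THE k. k < length c \<and> c ! k = c ! i) = i"
    using assms by (auto simp: nth_eq_iff_index_eq)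
  then show ?thesis using assms(2) by (simp add: cycle_labelling_def)
qed

lemma is_3RDF_cycle_labelling:
  assumes "simple_graph V E" and "is_cycle V E c"
  shows "is_3RDF V E (cycle_labelling V c)"
proof (rule is_3RDF_if_partner)
  show "finite V" and "\<And>v. \<not> E v v" using assms(1) by (simp_all add: simple_graph_def)
  have "set c \<subseteq> V" using assms(2) by (simp add: is_cycle_def)
  then show "\<And>v. v \<notin> V \<Longrightarrow> cycle_labelling V c v = 0" by (auto simp: cycle_labelling_def)
  show "\<And>v. cycle_labelling V c v \<le> 4" by (simp add: cycle_labelling_def path_labelling_le_4)
next
  fix v assume "v \<in> V" and low: "cycle_labelling V c v < 3"
  have "distinct c" and adj: "\<And>i. i < length c - 1 \<Longrightarrow> E (c ! i) (c ! (i + 1))"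
    using assms(2) by (simp_all add: is_cycle_def)
  have sym: "E u w \<Longrightarrow> E w u" for u w using assms(1) by (simp add: simple_graph_def)
  have "v \<in> set c" using low \<open>v \<in> V\<close> by (auto simp: cycle_labelling_def split: if_splits)
  then obtain i where "i < length c" and v: "v = c ! i" by (auto simp: in_set_conv_nth)
  then obtain j where j: "j = i + 1 \<and> j < length c \<or> j + 1 = i"
    and "1 \<le> path_labelling (length c) j"
    and "4 \<le> path_labelling (length c) i + path_labelling (length c) j"
    using path_labelling_partner low cycle_labelling_nth[OF \<open>distinct c\<close>] by metis
  moreover have "j < length c" using j \<open>i < length c\<close> by auto
  moreover have "E v (c ! j)" using j adj[of i] adj[of j] sym \<open>i < length c\<close> v by auto
  moreover have "c ! j \<in> V" using \<open>j < length c\<close> assms(2) by (auto simp: is_cycle_def)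
  ultimately show "\<exists>w\<in>V. E v w \<and> 1 \<le> cycle_labelling V c w \<and> 4 \<le> cycle_labelling V c v + cycle_labelling V c w"
    using cycle_labelling_nth[OF \<open>distinct c\<close>] \<open>i < length c\<close> v by auto
qed

lemma weight_cycle_labelling:
  assumes "finite V" and "set c \<subseteq> V" and "distinct c"
  shows "3 * sum (cycle_labelling V c) V + 5 * length c \<le> 9 * card V + 6"
proof -
  let ?h = "cycle_labelling V c" and ?g = "length c"
  have "sum ?h (set c) = (\<Sum>i<?g. ?h (c ! i))"
    using sum.reindex_bij_betw[OF bij_betw_nth[OF assms(3) refl refl], of ?h] by simp
  also have "\<dots> = (\<Sum>i<?g. path_labelling ?g i)"
    using cycle_labelling_nth[OF assms(3)] by simp
  finally have "3 * sum ?h (set c) \<le> 4 * ?g + 6"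
    using sum_path_labelling by simp
  moreover have "sum ?h (V - set c) = 3 * (card V - ?g)"
    using assms by (simp add: cycle_labelling_def card_Diff_subset distinct_card)
  moreover have "sum ?h V = sum ?h (set c) + sum ?h (V - set c)"
    using sum.subset_diff[OF assms(2,1), of ?h] by simp
  moreover have "?g \<le> card V"
    using assms by (metis card_mono distinct_card)
  ultimately show ?thesis by linarith
qed

theorem proposition24:
  fixes V :: "'a set" and E :: "'a \<Rightarrow> 'a \<Rightarrow> bool"
  assumes "simple_graph V E" and "connected_graph V E" and "has_cycle V E"
  shows "real (triple_roman_domination_number V E)
           \<le> 3 * real (card V) + 2 - 5 * real (girth V E) / 3"
proof -
  obtain c where c: "is_cycle V E c" and "length c = girth V E"
    using girth_cycle[OF assms(3)] .
  have "finite V" using assms(1) by (simp add: simple_graph_def)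
  moreover have "set c \<subseteq> V" and "distinct c" using c by (simp_all add: is_cycle_def)
  ultimately have "3 * sum (cycle_labelling V c) V + 5 * girth V E \<le> 9 * card V + 6"
    using weight_cycle_labelling \<open>length c = girth V E\<close> by metis
  moreover have "triple_roman_domination_number V E \<le> sum (cycle_labelling V c) V"
    using triple_roman_domination_number_le is_3RDF_cycle_labelling[OF assms(1) c] .
  ultimately have "real (3 * triple_roman_domination_number V E + 5 * girth V E) \<le> real (9 * card V + 6)"
    by (simp only: of_nat_le_iff)
  then show ?thesis by simp
qed

end
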